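(* Let $f=a_1+2a_2+4a_3+8a_4\in\mathcal{GB}_n^{16}$ with $a_1,\dots,a_4\in\mathcal{B}_n$. If $f$ is gbent, then its Gray image $\psi(f)(\mathbf{x},y_1,y_2,y_3)=y_1a_1(\mathbf{x})\oplus y_2a_2(\mathbf{x})\oplus y_3a_3(\mathbf{x})\oplus a_4(\mathbf{x})\in\mathcal{B}_{n+3}$ is semibent if $n$ is odd, and $3$-plateaued if $n$ is even.
   Context: $\mathcal{B}_m$: Boolean functions $\mathbb{F}_2^m\to\mathbb{F}_2$; $\mathcal{GB}_n^q$: functions $\mathbb{F}_2^n\to\mathbb{Z}_q$ (Boolean values viewed as integers, sum in $\mathbb{Z}_{16}$). $\mathcal{H}^{(q)}_f(\mathbf{u})=\sum_{\mathbf{x}}\zeta_q^{f(\mathbf{x})}(-1)^{\mathbf{u}\cdot\mathbf{x}}$ with $\zeta_q=e^{2\pi i/q}$; $f$ is gbent if $|\mathcal{H}^{(q)}_f(\mathbf{u})|=2^{n/2}$ for all $\mathbf{u}$. $\mathcal{W}_g(\mathbf{w})=\sum_{\mathbf{z}}(-1)^{g(\mathbf{z})+\mathbf{w}\cdot\mathbf{z}}$. A Boolean function $g$ on $\mathbb{F}_2^m$ is $s$-plateaued if $|\mathcal{W}_g(\mathbf{w})|\in\{0,2^{(m+s)/2}\}$ for all $\mathbf{w}$; it is semibent if it is $1$-plateaued ($m$ odd) or $2$-plateaued ($m$ even). *)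

theory Defs
  imports Complex_Main
begin

text \<open>Vectors of F_2^m are bool lists of length m (True = 1).\<close>
definition vecs :: "nat \<Rightarrow> bool list set" where
  "vecs m = {xs. length xs = m}"

definition dotp :: "bool list \<Rightarrow> bool list \<Rightarrow> bool" where
  "dotp u x = odd (card {i. i < length x \<and> i < length u \<and> u ! i \<and> x ! i})"

definition walsh :: "nat \<Rightarrow> (bool list \<Rightarrow> bool) \<Rightarrow> bool list \<Rightarrow> int" where
  "walsh m g w = (\<Sum>z\<in>vecs m. (-1::int) ^ (of_bool (g z) + of_bool (dotp w z)))"

definition plateaued :: "nat \<Rightarrow> nat \<Rightarrow> (bool list \<Rightarrow> bool) \<Rightarrow> bool" where
  "plateaued m s g \<longleftrightarrow>
     (\<forall>w\<in>vecs m. \<bar>real_of_int (walsh m g w)\<bar> \<in> {0, 2 powr ((real m + real s) / 2)})"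

definition semibent :: "nat \<Rightarrow> (bool list \<Rightarrow> bool) \<Rightarrow> bool" where
  "semibent m g \<longleftrightarrow> (if odd m then plateaued m 1 g else plateaued m 2 g)"

definition gwalsh :: "nat \<Rightarrow> nat \<Rightarrow> (bool list \<Rightarrow> nat) \<Rightarrow> bool list \<Rightarrow> complex" where
  "gwalsh n q f u = (\<Sum>x\<in>vecs n. cis (2 * pi * real (f x mod q) / real q)
                         * (-1) ^ (of_bool (dotp u x)))"

definition gbent :: "nat \<Rightarrow> nat \<Rightarrow> (bool list \<Rightarrow> nat) \<Rightarrow> bool" where
  "gbent n q f \<longleftrightarrow> (\<forall>u\<in>vecs n. cmod (gwalsh n q f u) = 2 powr (real n / 2))"

text \<open>Gray image psi(f)(x,y1,y2,y3) on F_2^{n+3}; z = x @ [y1,y2,y3].\<close>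
definition gray16 :: "nat \<Rightarrow> (bool list \<Rightarrow> bool) \<Rightarrow> (bool list \<Rightarrow> bool) \<Rightarrow> (bool list \<Rightarrow> bool)
    \<Rightarrow> (bool list \<Rightarrow> bool) \<Rightarrow> bool list \<Rightarrow> bool" where
  "gray16 n a1 a2 a3 a4 z =
     (let x = take n z; y = drop n z in
      ((y ! 0 \<and> a1 x) \<noteq> (y ! 1 \<and> a2 x)) \<noteq> ((y ! 2 \<and> a3 x) \<noteq> a4 x))"

end

theory Submission
  imports Defs
begin

text \<open>
  Let \<open>\<zeta> = exp(2\<pi>i/16)\<close> and let \<open>S\<^sub>t(u)\<close> be the Walsh sum of \<open>a\<^sub>4\<close> over the points where
  \<open>(a\<^sub>1, a\<^sub>2, a\<^sub>3)\<close> spells \<open>t\<close> in binary. The generalized Walsh transform of \<open>f\<close> at \<open>u\<close> is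
  \<open>z = \<Sum>\<^sub>t\<^sub><\<^sub>8 S\<^sub>t(u) \<zeta>\<^sup>t\<close>, and the Walsh transform of the Gray image at \<open>(u, v)\<close> is
  \<open>8 S\<^sub>t(u)\<close> for the \<open>t\<close> spelled by \<open>v\<close>.

  Gbentness says \<open>z z\<^sup>* = 2^n\<close> in \<open>\<int>[\<zeta>]\<close>, which has \<open>\<int>\<close>-basis \<open>1, \<zeta>, \<dots>, \<zeta>\<^sup>7\<close>. The prime
  \<open>\<lambda> = 1 - \<zeta>\<close> has residue field \<open>\<bbbF>\<^sub>2\<close>, and \<open>2 = \<lambda>^8 \<eta>\<close> with \<open>\<eta>\<close> integral. If \<open>n \<ge> 2\<close> and
  \<open>\<lambda>^8\<close> does not divide \<open>z\<close>, then \<open>z = \<lambda>^j w\<close> with \<open>j < 8\<close> and \<open>w \<equiv> 1 mod \<lambda>\<close>, so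
  \<open>z z\<^sup>* = \<lambda>^(2j) v\<close> with \<open>v \<equiv> 1 mod \<lambda>\<close>, which is not divisible by \<open>4 = \<lambda>^16 \<eta>^2\<close>. Hence
  \<open>\<lambda>^8\<close> divides \<open>z\<close>; as \<open>\<lambda>^8 \<in> 2\<int>[\<zeta>]\<close>, all coefficients of \<open>z\<close> are even, and halving them
  descends from \<open>n\<close> to \<open>n - 2\<close>.
  For \<open>n \<le> 1\<close> the constant coefficient of \<open>z z\<^sup>*\<close> gives \<open>\<Sum> S\<^sub>t(u)^2 = 2^n \<le> 2\<close>. So every
  \<open>S\<^sub>t(u)\<close> is \<open>0\<close> or \<open>\<plusminus>2^(n div 2)\<close>, and the Gray image has Walsh values in
  \<open>{0, \<plusminus>2^(n div 2 + 3)}\<close>.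
\<close>

section \<open>Independence of \<open>1, cos(\<pi>/8), \<surd>2/2, sin(\<pi>/8)\<close> over \<open>\<int>\<close>\<close>

lemma int_square_eq_twice_square:
  fixes a b :: int
  assumes "a^2 = 2 * b^2"
  shows "b = 0"
  using assms
proof (induction "nat \<bar>b\<bar>" arbitrary: a b rule: less_induct)
  case less
  show ?case
  proof (rule ccontr)
    assume "b \<noteq> 0"
    have "even a" using less.prems by (metis dvd_triv_left even_power pos2)
    then obtain a' where a': "a = 2 * a'" ..
    then have "b^2 = 2 * a'^2" using less.prems by (simp add: power2_eq_square)
    then have "even b" by (metis dvd_triv_left even_power pos2)
    then obtain b' where b': "b = 2 * b'" ..
    have "a'^2 = 2 * b'^2" using \<open>b^2 = 2 * a'^2\<close> b' by (simp add: power2_eq_square)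
    moreover have "nat \<bar>b'\<bar> < nat \<bar>b\<bar>" using b' \<open>b \<noteq> 0\<close> by auto
    ultimately have "b' = 0" using less.hyps by blast
    then show False using b' \<open>b \<noteq> 0\<close> by simp
  qed
qed

lemma of_int_plus_of_int_sqrt2_eq_0:
  fixes x y :: int
  assumes "of_int x + of_int y * sqrt 2 = (0::real)"
  shows "x = 0 \<and> y = 0"
proof -
  have "(of_int x)^2 = (2::real) * (of_int y)^2"
    using assms by (simp add: eq_neg_iff_add_eq_0[symmetric] power_mult_distrib)
  then have "x^2 = 2 * y^2" by (metis of_int_eq_iff of_int_mult of_int_numeral of_int_power)
  then have "y = 0" by (rule int_square_eq_twice_square)
  then show ?thesis using assms by simp
qed

lemma two_plus_sqrt2_not_square:
  fixes x1 x2 y1 y2 :: int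
  assumes "(2 + sqrt 2) * (of_int x1 + of_int x2 * sqrt 2)^2 = (of_int y1 + of_int y2 * sqrt 2)^2"
  shows "x1 = 0 \<and> x2 = 0 \<and> y1 = 0 \<and> y2 = 0"
proof -
  define r :: real where "r = sqrt 2"
  have rr: "r * r = 2" by (simp add: r_def)
  have "(2 + r) * (X1 + X2 * r)^2 - (Y1 + Y2 * r)^2
      = (2*X1^2 + 4*X2^2 + 4*X1*X2 - Y1^2 - 2*Y2^2) + (X1^2 + 2*X2^2 + 4*X1*X2 - 2*Y1*Y2) * r"
    for X1 X2 Y1 Y2 :: real
  proof -
    have "(2 + r) * (X1 + X2 * r)^2 - (Y1 + Y2 * r)^2
        = 2*X1^2 + 2*X2^2*(r*r) + 4*X1*X2*r + r*X1^2 + X2^2*(r*r)*r + 2*X1*X2*(r*r)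
          - (Y1^2 + 2*Y1*Y2*r + Y2^2*(r*r))"
      by (simp add: power2_eq_square algebra_simps)
    then show ?thesis unfolding rr by (simp add: algebra_simps)
  qed
  from this[of "of_int x1" "of_int x2" "of_int y1" "of_int y2"]
  have "of_int (2*x1^2 + 4*x2^2 + 4*x1*x2 - y1^2 - 2*y2^2)
        + of_int (x1^2 + 2*x2^2 + 4*x1*x2 - 2*y1*y2) * sqrt 2 = (0::real)"
    using assms by (simp add: r_def)
  from of_int_plus_of_int_sqrt2_eq_0[OF this] have e1: "2*x1^2 + 4*x2^2 + 4*x1*x2 = y1^2 + 2*y2^2"
      and e2: "x1^2 + 2*x2^2 + 4*x1*x2 = 2*y1*y2"
    by simp_all
  \<comment> \<open>Taking norms from \<open>\<int>[\<surd>2]\<close> to \<open>\<int>\<close>: \<open>N(2 + \<surd>2) N(x)\<^sup>2 = N(y)\<^sup>2\<close> with \<open>N(2 + \<surd>2) = 2\<close>.\<close>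
  have "(y1^2 - 2*y2^2)^2 = (y1^2 + 2*y2^2)^2 - 2*(2*y1*y2)^2" by algebra
  also have "\<dots> = 2 * (x1^2 - 2*x2^2)^2"
    unfolding e1[symmetric] e2[symmetric] by algebra
  finally have "x1^2 = 2 * x2^2"
    using int_square_eq_twice_square[of "y1^2 - 2*y2^2" "x1^2 - 2*x2^2"] by simp
  then have x: "x1 = 0 \<and> x2 = 0" using int_square_eq_twice_square[of x1 x2] by simp
  with e1 have "y1^2 + 2*y2^2 = 0" by simp
  moreover have "y1^2 \<ge> 0" "y2^2 \<ge> 0" by simp_all
  ultimately have "y1^2 = 0" "y2^2 = 0" by linarith+
  with x show ?thesis by simp
qed

lemma cos_pi8_square: "4 * cos (pi / 8)^2 = 2 + sqrt 2"
proof -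
  have "cos (2 * (pi / 8)) = 2 * cos (pi / 8)^2 - 1" by (rule cos_double_cos)
  then show ?thesis using cos_45 by simp
qed

lemma cos_sin_pi8: "4 * cos (pi / 8) * sin (pi / 8) = sqrt 2"
proof -
  have "sin (2 * (pi / 8)) = 2 * sin (pi / 8) * cos (pi / 8)" by (rule sin_double)
  then show ?thesis using sin_45 by simp
qed

lemma cos_pi8_independent:
  fixes p q r s :: int
  assumes "of_int p + of_int q * cos (pi / 8) + of_int r * (sqrt 2 / 2) + of_int s * sin (pi / 8) = 0"
  shows "p = 0 \<and> q = 0 \<and> r = 0 \<and> s = 0"
proof -
  define c where "c = cos (pi / 8)"
  have cc: "4 * c^2 = 2 + sqrt 2" and cs: "4 * c * sin (pi / 8) = sqrt 2"
    unfolding c_def by (rule cos_pi8_square, rule cos_sin_pi8)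
  \<comment> \<open>Multiplying by \<open>4 cos(\<pi>/8)\<close> leaves \<open>cos(\<pi>/8)\<close> only in the odd part; squaring then
      yields an equation in \<open>\<int>[\<surd>2]\<close>.\<close>
  have "4 * c * (of_int p + of_int q * c + of_int r * (sqrt 2 / 2) + of_int s * sin (pi / 8)) = 0"
    using assms by (simp add: c_def)
  then have "of_int q * (4 * c^2) + 2 * c * (2 * of_int p + of_int r * sqrt 2)
      + of_int s * (4 * c * sin (pi / 8)) = 0"
    by (simp add: algebra_simps power2_eq_square)
  then have "2 * c * (2 * of_int p + of_int r * sqrt 2) = - (2 * of_int q + (of_int q + of_int s) * sqrt 2)"
    unfolding cc cs by (simp add: algebra_simps)
  then have "(4 * c^2) * (2 * of_int p + of_int r * sqrt 2)^2 = (2 * of_int q + (of_int q + of_int s) * sqrt 2)^2"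
    by (metis power2_minus power_mult_distrib mult.assoc four_x_squared)
  then have "(2 + sqrt 2) * (of_int (2 * p) + of_int r * sqrt 2)^2
      = (of_int (2 * q) + of_int (q + s) * sqrt 2)^2"
    unfolding cc by simp
  from two_plus_sqrt2_not_square[OF this] show ?thesis by simp
qed

section \<open>The ring \<open>\<int>[\<zeta>]\<close>, \<open>\<zeta>\<close> a primitive 16th root of unity\<close>

definition zeta :: complex where
  "zeta = cis (pi / 8)"

lemma zeta_pow: "zeta ^ k = cis (real k * pi / 8)"
  unfolding zeta_def DeMoivre by simp

lemma zeta_pow_8: "zeta ^ 8 = -1"
  unfolding zeta_pow by simp

lemma zeta_pow_mod_8: "zeta ^ k = (-1) ^ (k div 8) * zeta ^ (k mod 8)"
proof -
  have "zeta ^ k = (zeta ^ 8) ^ (k div 8) * zeta ^ (k mod 8)"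
    by (subst div_mult_mod_eq[of k 8, symmetric]) (simp only: power_add power_mult mult.commute)
  then show ?thesis by (simp add: zeta_pow_8)
qed

lemma zeta_nonzero: "zeta \<noteq> 0"
  by (simp add: zeta_def)

lemma cnj_zeta: "cnj zeta = zeta ^ 15"
proof -
  have "zeta ^ 15 * zeta = (zeta ^ 8) ^ 2"
    by (simp flip: power_Suc2 power_mult)
  also have "\<dots> = 1" by (simp add: zeta_pow_8)
  also have "\<dots> = cnj zeta * zeta" by (simp add: zeta_def cis_cnj cis_mult)
  finally show ?thesis using zeta_nonzero by simp
qed

definition of_coeffs :: "(nat \<Rightarrow> int) \<Rightarrow> complex" where
  "of_coeffs c = (\<Sum>t<8. of_int (c t) * zeta ^ t)"

lemma sum_lessThan_8: "(\<Sum>t<8. f t) = f 0 + f 1 + f 2 + f 3 + f 4 + f 5 + f 6 + f (7::nat)"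
  by (simp add: eval_nat_numeral add.assoc)

lemma of_coeffs_eq_Complex:
  "of_coeffs c = Complex
     (of_int (c 0) + of_int (c 1 - c 7) * cos (pi / 8) + of_int (c 2 - c 6) * (sqrt 2 / 2)
        + of_int (c 3 - c 5) * sin (pi / 8))
     (of_int (c 4) + of_int (c 3 + c 5) * cos (pi / 8) + of_int (c 2 + c 6) * (sqrt 2 / 2)
        + of_int (c 1 + c 7) * sin (pi / 8))"
proof -
  have z1: "zeta = Complex (cos (pi / 8)) (sin (pi / 8))" unfolding zeta_def by (simp add: complex_eq_iff)
  have z2: "zeta ^ 2 = Complex (sqrt 2 / 2) (sqrt 2 / 2)"
    unfolding zeta_pow by (simp add: complex_eq_iff cos_45 sin_45)
  have z4: "zeta ^ 4 = \<i>" unfolding zeta_pow by simp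
  have "zeta ^ 4 * cnj zeta = zeta ^ 3"
    unfolding cnj_zeta by (simp add: zeta_pow_mod_8[of 19] flip: power_add)
  then have "zeta ^ 3 = \<i> * cnj zeta" by (simp add: z4)
  then have z3: "zeta ^ 3 = Complex (sin (pi / 8)) (cos (pi / 8))"
    by (simp add: z1 complex_eq_iff)
  have z567: "zeta ^ 5 = \<i> * zeta" "zeta ^ 6 = \<i> * zeta ^ 2" "zeta ^ 7 = \<i> * zeta ^ 3"
    unfolding z4[symmetric] by (simp_all flip: power_add power_Suc2)
  show ?thesis
    unfolding of_coeffs_def sum_lessThan_8 z567 z2 z3 z4
    by (simp add: z1 complex_eq_iff algebra_simps)
qed

lemma of_coeffs_eq_0_iff: "of_coeffs c = 0 \<longleftrightarrow> (\<forall>t<8. c t = 0)"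
proof
  assume "of_coeffs c = 0"
  then have "of_int (c 0) + of_int (c 1 - c 7) * cos (pi / 8) + of_int (c 2 - c 6) * (sqrt 2 / 2)
        + of_int (c 3 - c 5) * sin (pi / 8) = 0"
      and "of_int (c 4) + of_int (c 3 + c 5) * cos (pi / 8) + of_int (c 2 + c 6) * (sqrt 2 / 2)
        + of_int (c 1 + c 7) * sin (pi / 8) = 0"
    unfolding of_coeffs_eq_Complex complex_eq_iff by simp_all
  from this[THEN cos_pi8_independent]
  have "c 0 = 0 \<and> c 1 - c 7 = 0 \<and> c 2 - c 6 = 0 \<and> c 3 - c 5 = 0"
      and "c 4 = 0 \<and> c 3 + c 5 = 0 \<and> c 2 + c 6 = 0 \<and> c 1 + c 7 = 0" .
  then show "\<forall>t<8. c t = 0" by (auto simp: less_Suc_eq numeral_eq_Suc)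
qed (simp add: of_coeffs_def)

lemma of_coeffs_sum: "of_coeffs (\<lambda>t. \<Sum>j\<in>A. c j t) = (\<Sum>j\<in>A. of_coeffs (c j))"
  unfolding of_coeffs_def by (simp add: sum_distrib_right sum.swap[of _ A])

lemma of_coeffs_smult: "of_coeffs (\<lambda>t. k * c t) = of_int k * of_coeffs c"
  unfolding of_coeffs_def by (simp add: sum_distrib_left mult.assoc)

lemma of_coeffs_diff: "of_coeffs (\<lambda>t. c t - d t) = of_coeffs c - of_coeffs d"
  unfolding of_coeffs_def by (simp add: sum_subtractf left_diff_distrib)

lemma of_coeffs_eq_iff: "of_coeffs c = of_coeffs d \<longleftrightarrow> (\<forall>t<8. c t = d t)"
  using of_coeffs_eq_0_iff[of "\<lambda>t. c t - d t"] by (simp add: of_coeffs_diff)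

lemma of_coeffs_single:
  assumes "j < 8"
  shows "of_coeffs (\<lambda>t. if t = j then k else 0) = of_int k * zeta ^ j"
proof -
  have "of_coeffs (\<lambda>t. if t = j then k else 0) = (\<Sum>t<8. if t = j then of_int k * zeta ^ t else 0)"
    unfolding of_coeffs_def by (rule sum.cong) auto
  then show ?thesis using assms by simp
qed

lemma of_coeffs_of_int: "of_coeffs (\<lambda>t. if t = 0 then k else 0) = of_int k"
  by (simp add: of_coeffs_single)

definition zeta_pow_coeffs :: "nat \<Rightarrow> nat \<Rightarrow> int" where
  "zeta_pow_coeffs k = (\<lambda>t. if t = k mod 8 then (-1) ^ (k div 8) else 0)"

lemma of_zeta_pow_coeffs: "of_coeffs (zeta_pow_coeffs k) = zeta ^ k"
  unfolding zeta_pow_coeffs_def zeta_pow_mod_8[of k] by (simp add: of_coeffs_single)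

definition Zzeta :: "complex set" where
  "Zzeta = range of_coeffs"

lemma of_coeffs_in_Zzeta [simp]: "of_coeffs c \<in> Zzeta"
  by (simp add: Zzeta_def)

lemma Zzeta_sum: "(\<And>j. j \<in> A \<Longrightarrow> f j \<in> Zzeta) \<Longrightarrow> (\<Sum>j\<in>A. f j) \<in> Zzeta"
proof -
  assume "\<And>j. j \<in> A \<Longrightarrow> f j \<in> Zzeta"
  then have "\<forall>j\<in>A. \<exists>c. f j = of_coeffs c" unfolding Zzeta_def by blast
  then obtain c where "\<And>j. j \<in> A \<Longrightarrow> f j = of_coeffs (c j)" by metis
  then have "(\<Sum>j\<in>A. f j) = of_coeffs (\<lambda>t. \<Sum>j\<in>A. c j t)" by (simp add: of_coeffs_sum)
  then show ?thesis by simp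
qed

lemma Zzeta_add: "a \<in> Zzeta \<Longrightarrow> b \<in> Zzeta \<Longrightarrow> a + b \<in> Zzeta"
  using Zzeta_sum[of "{0, 1::nat}" "\<lambda>j. if j = 0 then a else b"] by simp

lemma Zzeta_of_int_mult: "a \<in> Zzeta \<Longrightarrow> of_int k * a \<in> Zzeta"
  unfolding Zzeta_def by (metis of_coeffs_smult rangeE rangeI)

lemma Zzeta_diff: "a \<in> Zzeta \<Longrightarrow> b \<in> Zzeta \<Longrightarrow> a - b \<in> Zzeta"
  using Zzeta_add[of a "of_int (-1) * b"] Zzeta_of_int_mult[of b "-1"] by simp

lemma Zzeta_of_int: "of_int k \<in> Zzeta"
  by (metis of_coeffs_in_Zzeta of_coeffs_of_int)

lemma Zzeta_zeta_pow: "zeta ^ k \<in> Zzeta"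
  by (metis of_coeffs_in_Zzeta of_zeta_pow_coeffs)

lemma Zzeta_mult: "a \<in> Zzeta \<Longrightarrow> b \<in> Zzeta \<Longrightarrow> a * b \<in> Zzeta"
proof -
  assume "a \<in> Zzeta" "b \<in> Zzeta"
  then obtain c d where "a = of_coeffs c" "b = of_coeffs d" unfolding Zzeta_def by blast
  then have "a * b = (\<Sum>t<8. \<Sum>s<8. of_int (c t * d s) * zeta ^ (t + s))"
    unfolding of_coeffs_def by (simp add: sum_product power_add algebra_simps)
  then show ?thesis by (simp only:) (intro Zzeta_sum Zzeta_of_int_mult Zzeta_zeta_pow)
qed

lemma Zzeta_power: "a \<in> Zzeta \<Longrightarrow> a ^ k \<in> Zzeta"
  by (induction k) (simp_all add: Zzeta_mult Zzeta_of_int[of 1, simplified])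

lemma Zzeta_cnj: "a \<in> Zzeta \<Longrightarrow> cnj a \<in> Zzeta"
proof -
  assume "a \<in> Zzeta"
  then obtain c where "a = of_coeffs c" unfolding Zzeta_def by blast
  then have "cnj a = (\<Sum>t<8. of_int (c t) * zeta ^ (15 * t))"
    unfolding of_coeffs_def by (simp add: cnj_zeta flip: power_mult)
  then show ?thesis by (simp only:) (intro Zzeta_sum Zzeta_of_int_mult Zzeta_zeta_pow)
qed

lemma add_15_mult_mod_8_eq_0_iff:
  fixes s t :: nat
  assumes "t < 8" and "s < 8"
  shows "(t + 15 * s) mod 8 = 0 \<longleftrightarrow> s = t"
proof
  assume "(t + 15 * s) mod 8 = 0"
  then have "(8::int) dvd int (t + 15 * s)"
    by (metis mod_eq_0_iff_dvd int_dvd_int_iff of_nat_numeral)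
  moreover have "int t - int s = int (t + 15 * s) - 8 * (2 * int s)" by simp
  ultimately have "(8::int) dvd int t - int s" by (metis dvd_diff dvd_triv_left)
  with assms show "s = t" using dvd_imp_le_int[of "int t - int s" 8] by linarith
qed simp

lemma sum_squares_coeffs_if_norm_eq:
  assumes "of_coeffs c * cnj (of_coeffs c) = of_int N"
  shows "(\<Sum>t<8. c t ^ 2) = N"
proof -
  define r where "r i = (\<Sum>t<8. \<Sum>s<8. c t * c s * zeta_pow_coeffs (t + 15 * s) i)" for i
  have "of_coeffs c * cnj (of_coeffs c) = (\<Sum>t<8. \<Sum>s<8. of_int (c t * c s) * zeta ^ (t + 15 * s))"
    unfolding of_coeffs_def by (simp add: sum_product cnj_zeta power_add algebra_simps flip: power_mult)
  also have "\<dots> = of_coeffs r"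
    unfolding r_def of_coeffs_sum of_coeffs_smult of_zeta_pow_coeffs by simp
  finally have "of_coeffs c * cnj (of_coeffs c) = of_coeffs r" .
  have sum_squares: "r 0 = (\<Sum>t<8. c t ^ 2)"
  proof -
    have "zeta_pow_coeffs (t + 15 * s) 0 = (if s = t then 1 else 0)" if "t < 8" "s < 8" for t s
    proof -
      have "(t + 15 * s) mod 8 = 0 \<longleftrightarrow> s = t" using add_15_mult_mod_8_eq_0_iff[OF that] .
      moreover have "(t + 15 * t) div 8 = 2 * t" by simp
      ultimately show ?thesis by (auto simp: zeta_pow_coeffs_def)
    qed
    then have "r 0 = (\<Sum>t<8. \<Sum>s<8. if s = t then c t * c s else 0)"
      unfolding r_def by (intro sum.cong) auto
    then show ?thesis by (simp add: power2_eq_square)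
  qed
  have "of_coeffs r = of_coeffs (\<lambda>t. if t = 0 then N else 0)"
    unfolding of_coeffs_of_int using assms \<open>of_coeffs c * cnj (of_coeffs c) = of_coeffs r\<close> by simp
  then have "r 0 = N" unfolding of_coeffs_eq_iff by auto
  with sum_squares show ?thesis by simp
qed

section \<open>The prime \<open>\<lambda> = 1 - \<zeta>\<close> above 2\<close>

definition lam :: complex where
  "lam = 1 - zeta"

lemma zeta_mult_of_coeffs: "zeta * of_coeffs c = of_coeffs (\<lambda>t. if t = 0 then - c 7 else c (t - 1))"
  unfolding of_coeffs_def sum_lessThan_8 using zeta_pow_8 by simp algebra

lemma lam_mult_of_coeffs:
  "lam * of_coeffs c = of_coeffs (\<lambda>t. c t - (if t = 0 then - c 7 else c (t - 1)))"
  unfolding lam_def of_coeffs_diff zeta_mult_of_coeffs[symmetric] by (simp add: algebra_simps)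

lemma coeff_sum_even_if_lam_dvd:
  assumes "of_coeffs c = lam * w" and "w \<in> Zzeta"
  shows "even (\<Sum>t<8. c t)"
proof -
  obtain d where "w = of_coeffs d" using assms(2) unfolding Zzeta_def by blast
  then have "\<forall>t<8. c t = d t - (if t = 0 then - d 7 else d (t - 1))"
    using assms(1) lam_mult_of_coeffs of_coeffs_eq_iff by simp
  then have "(\<Sum>t<8. c t) = 2 * d 7" unfolding sum_lessThan_8 by simp
  then show ?thesis by simp
qed

lemma lam_dvd_if_coeff_sum_even:
  assumes "even (\<Sum>t<8. c t)"
  shows "\<exists>w\<in>Zzeta. of_coeffs c = lam * w"
proof -
  \<comment> \<open>Invert \<open>d \<mapsto> d t - d (t - 1)\<close> by partial sums, shifted so that the wrap-around
      coefficient \<open>d 0 + d 7\<close> comes out right.\<close>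
  define d where "d t = (\<Sum>k\<le>t. c k) - (\<Sum>t<8. c t) div 2" for t
  have "c t = d t - (if t = 0 then - d 7 else d (t - 1))" if "t < 8" for t
  proof (cases t)
    case 0
    have "(\<Sum>k\<le>7. c k) = (\<Sum>t<8. c t)" by (simp flip: lessThan_Suc_atMost)
    then show ?thesis using 0 assms by (simp add: d_def)
  qed (simp add: d_def)
  then have "of_coeffs c = lam * of_coeffs d" using lam_mult_of_coeffs of_coeffs_eq_iff by simp
  then show ?thesis using of_coeffs_in_Zzeta by blast
qed

lemma lam_in_Zzeta: "lam \<in> Zzeta"
  unfolding lam_def using Zzeta_diff[OF Zzeta_of_int[of 1] Zzeta_zeta_pow[of 1]] by simp

lemma lam_nonzero: "lam \<noteq> 0"
  unfolding lam_def using zeta_pow_8 by auto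

lemma cnj_lam: "cnj lam = lam * zeta ^ 7"
proof -
  have "cnj zeta = - (zeta ^ 7)" using zeta_pow_mod_8[of 15] by (simp add: cnj_zeta)
  then show ?thesis unfolding lam_def using zeta_pow_8 by (simp add: algebra_simps flip: power_Suc)
qed

definition lam_dvd :: "complex \<Rightarrow> bool" where
  "lam_dvd z \<longleftrightarrow> (\<exists>w\<in>Zzeta. z = lam * w)"

definition one_mod_lam :: "complex \<Rightarrow> bool" where
  "one_mod_lam z \<longleftrightarrow> (\<exists>w\<in>Zzeta. z = 1 + lam * w)"

lemma lam_dvd_or_one_mod_lam:
  assumes "z \<in> Zzeta"
  shows "lam_dvd z \<or> one_mod_lam z"
proof -
  obtain c where c: "z = of_coeffs c" using assms unfolding Zzeta_def by blast
  show ?thesis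
  proof (cases "even (\<Sum>t<8. c t)")
    case True
    then show ?thesis using c lam_dvd_if_coeff_sum_even unfolding lam_dvd_def by blast
  next
    case False
    define c' where "c' t = c t - (if t = 0 then 1 else 0)" for t
    have "(\<Sum>t<8. c' t) = (\<Sum>t<8. c t) - 1" unfolding c'_def by (simp add: sum_subtractf)
    with False obtain w where "w \<in> Zzeta" "of_coeffs c' = lam * w"
      using lam_dvd_if_coeff_sum_even[of c'] by auto
    moreover have "of_coeffs c' = z - 1"
      unfolding c c'_def of_coeffs_diff of_coeffs_of_int[of 1] by simp
    ultimately show ?thesis unfolding one_mod_lam_def by (metis add.commute diff_add_cancel)
  qed
qed

lemma one_mod_lam_not_lam_dvd: "one_mod_lam z \<Longrightarrow> \<not> lam_dvd z"
proof
  assume "one_mod_lam z" "lam_dvd z"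
  then obtain w w' where "w \<in> Zzeta" "w' \<in> Zzeta" "z = 1 + lam * w" "z = lam * w'"
    unfolding one_mod_lam_def lam_dvd_def by blast
  then have "of_coeffs (\<lambda>t. if t = 0 then 1 else 0) = lam * (w' - w)" "w' - w \<in> Zzeta"
    by (simp_all add: of_coeffs_of_int[of 1] algebra_simps Zzeta_diff)
  then have "even (\<Sum>t<8::nat. if t = 0 then 1 else (0::int))" by (rule coeff_sum_even_if_lam_dvd)
  then show False by simp
qed

lemma one_mod_lam_mult: "one_mod_lam a \<Longrightarrow> one_mod_lam b \<Longrightarrow> one_mod_lam (a * b)"
proof -
  assume "one_mod_lam a" "one_mod_lam b"
  then obtain v w where "v \<in> Zzeta" "w \<in> Zzeta" "a = 1 + lam * v" "b = 1 + lam * w"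
    unfolding one_mod_lam_def by blast
  moreover from this have "v + w + lam * v * w \<in> Zzeta"
    by (simp add: Zzeta_add Zzeta_mult lam_in_Zzeta)
  ultimately show ?thesis unfolding one_mod_lam_def
    by (intro bexI[of _ "v + w + lam * v * w"]) (simp_all add: algebra_simps)
qed

lemma one_mod_lam_power: "one_mod_lam a \<Longrightarrow> one_mod_lam (a ^ k)"
proof (induction k)
  case 0
  show ?case unfolding one_mod_lam_def using Zzeta_of_int[of 0] by (intro bexI[of _ 0]) auto
qed (simp add: one_mod_lam_mult)

lemma one_mod_lam_zeta: "one_mod_lam zeta"
  unfolding one_mod_lam_def lam_def using Zzeta_of_int[of "-1"] by (intro bexI[of _ "-1"]) auto

lemma one_mod_lam_cnj: "one_mod_lam z \<Longrightarrow> one_mod_lam (cnj z)"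
proof -
  assume "one_mod_lam z"
  then obtain w where "w \<in> Zzeta" "z = 1 + lam * w" unfolding one_mod_lam_def by blast
  moreover from this have "zeta ^ 7 * cnj w \<in> Zzeta" by (simp add: Zzeta_mult Zzeta_zeta_pow Zzeta_cnj)
  ultimately show ?thesis unfolding one_mod_lam_def
    by (intro bexI[of _ "zeta ^ 7 * cnj w"]) (simp_all add: cnj_lam algebra_simps)
qed

lemma two_eq_lam_pow_8_mult: "\<exists>\<eta>\<in>Zzeta. 2 = lam ^ 8 * \<eta>"
proof -
  have "(1 - x)^8 * (- 356 * x - 658 * x^2 - 860 * x^3 - 931 * x^4 - 860 * x^5 - 658 * x^6 - 356 * x^7)
      = 2 + (x^8 + 1) * (- 2 - 356 * x + 2190 * x^2 - 5564 * x^3 + 7461 * x^4 - 5564 * x^5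
                          + 2190 * x^6 - 356 * x^7)" for x :: complex
    by algebra
  then have "2 = lam ^ 8 * of_coeffs (\<lambda>t. [0, -356, -658, -860, -931, -860, -658, -356] ! t)"
    unfolding lam_def of_coeffs_def sum_lessThan_8 using zeta_pow_8 by simp
  then show ?thesis using of_coeffs_in_Zzeta by blast
qed

lemma lam_pow_8_eq_two_mult: "\<exists>\<beta>\<in>Zzeta. lam ^ 8 = 2 * \<beta>"
proof -
  have "(1 - x)^8 = 2 * (- 4 * x + 14 * x^2 - 28 * x^3 + 35 * x^4 - 28 * x^5 + 14 * x^6 - 4 * x^7)
      + (x^8 + 1)" for x :: complex
    by algebra
  then have "lam ^ 8 = 2 * of_coeffs (\<lambda>t. [0, -4, 14, -28, 35, -28, 14, -4] ! t)"
    unfolding lam_def of_coeffs_def sum_lessThan_8 using zeta_pow_8 by simp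
  then show ?thesis using of_coeffs_in_Zzeta by blast
qed

lemma lam_adic_expansion:
  assumes "z \<in> Zzeta"
  shows "(\<exists>j<k. \<exists>w. one_mod_lam w \<and> z = lam ^ j * w) \<or> (\<exists>w\<in>Zzeta. z = lam ^ k * w)"
proof (induction k)
  case 0
  show ?case using assms by auto
next
  case (Suc k)
  then show ?case
  proof (elim disjE)
    assume "\<exists>w\<in>Zzeta. z = lam ^ k * w"
    then obtain w where "w \<in> Zzeta" "z = lam ^ k * w" by blast
    with lam_dvd_or_one_mod_lam[of w] show ?case
      unfolding lam_dvd_def by (auto simp: mult.assoc)
  qed (use less_SucI in blast)
qed

section \<open>Elements with \<open>z z\<^sup>* = 2\<^sup>n\<close>\<close>

lemma norm_not_pow2_if_one_mod_lam:
  assumes "one_mod_lam w" and "j < 8" and "2 \<le> n"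
  shows "lam ^ j * w * cnj (lam ^ j * w) \<noteq> 2 ^ n"
proof
  assume norm: "lam ^ j * w * cnj (lam ^ j * w) = 2 ^ n"
  define v where "v = (zeta ^ 7) ^ j * (w * cnj w)"
  have "one_mod_lam v"
    unfolding v_def using assms(1) one_mod_lam_zeta
    by (intro one_mod_lam_mult one_mod_lam_power one_mod_lam_cnj)
  have "lam ^ j * w * cnj (lam ^ j * w) = lam ^ (2 * j) * v"
    unfolding v_def mult_2 power_add by (simp add: cnj_lam power_mult_distrib mult_ac)
  obtain \<eta> where "\<eta> \<in> Zzeta" "2 = lam ^ 8 * \<eta>" using two_eq_lam_pow_8_mult by blast
  \<comment> \<open>\<open>4 = \<lambda>\<^sup>1\<^sup>6 \<eta>\<^sup>2\<close> and \<open>2 j < 16\<close>, so cancelling \<open>\<lambda>\<^sup>2\<^sup>j\<close> leaves \<open>v\<close> divisible by \<open>\<lambda>\<close>.\<close>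
  have "16 = 2 * j + Suc (15 - 2 * j)" using assms(2) by simp
  then have "lam ^ 16 = lam ^ (2 * j) * (lam * lam ^ (15 - 2 * j))"
    by (metis power_add power_Suc)
  have "(2::complex) ^ n = 2 ^ 2 * 2 ^ (n - 2)" using assms(3) by (metis le_add_diff_inverse power_add)
  also have "\<dots> = lam ^ 16 * (\<eta> ^ 2 * 2 ^ (n - 2))"
    unfolding \<open>2 = lam ^ 8 * \<eta>\<close> by (simp add: power_mult_distrib flip: power_mult)
  also have "\<dots> = lam ^ (2 * j) * (lam * (lam ^ (15 - 2 * j) * \<eta> ^ 2 * 2 ^ (n - 2)))"
    unfolding \<open>lam ^ 16 = _\<close> by (simp add: mult_ac)
  finally have "v = lam * (lam ^ (15 - 2 * j) * \<eta> ^ 2 * 2 ^ (n - 2))"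
    using norm \<open>lam ^ j * w * cnj (lam ^ j * w) = lam ^ (2 * j) * v\<close> lam_nonzero by simp
  moreover have "lam ^ (15 - 2 * j) * \<eta> ^ 2 * 2 ^ (n - 2) \<in> Zzeta"
    using \<open>\<eta> \<in> Zzeta\<close> Zzeta_of_int[of 2]
    by (intro Zzeta_mult Zzeta_power lam_in_Zzeta) simp_all
  ultimately have "lam_dvd v" unfolding lam_dvd_def by blast
  then show False using \<open>one_mod_lam v\<close> one_mod_lam_not_lam_dvd by blast
qed

lemma even_coeffs_if_lam_pow_8_dvd:
  assumes "of_coeffs s = lam ^ 8 * w" and "w \<in> Zzeta"
  shows "\<forall>t<8. even (s t)"
proof -
  obtain \<beta> where "\<beta> \<in> Zzeta" "lam ^ 8 = 2 * \<beta>" using lam_pow_8_eq_two_mult by blast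
  then obtain d where "\<beta> * w = of_coeffs d" using assms(2) Zzeta_mult unfolding Zzeta_def by blast
  then have "of_coeffs s = of_coeffs (\<lambda>t. 2 * d t)"
    using assms(1) \<open>lam ^ 8 = 2 * \<beta>\<close> by (simp add: of_coeffs_smult)
  then show ?thesis by (simp add: of_coeffs_eq_iff)
qed

lemma even_coeffs_if_norm_pow2:
  assumes "of_coeffs s * cnj (of_coeffs s) = 2 ^ n" and "2 \<le> n"
  shows "\<forall>t<8. even (s t)"
  using lam_adic_expansion[OF of_coeffs_in_Zzeta[of s], of 8]
proof (elim disjE exE bexE conjE)
  fix j w
  assume "j < 8" "one_mod_lam w" "of_coeffs s = lam ^ j * w"
  then show ?thesis using norm_not_pow2_if_one_mod_lam assms by metis
qed (metis even_coeffs_if_lam_pow_8_dvd)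

lemma abs_le_1_if_sum_squares_le_2:
  fixes s :: "'a \<Rightarrow> int"
  assumes "(\<Sum>i\<in>A. s i ^ 2) \<le> 2" and "finite A" and "t \<in> A"
  shows "\<bar>s t\<bar> \<le> 1"
proof (rule ccontr)
  assume "\<not> \<bar>s t\<bar> \<le> 1"
  then have "2 ^ 2 \<le> \<bar>s t\<bar> ^ 2" by (intro power_mono) auto
  also have "\<dots> = s t ^ 2" by simp
  also have "\<dots> \<le> (\<Sum>i\<in>A. s i ^ 2)" using assms(2,3) by (intro member_le_sum) auto
  finally show False using assms(1) by simp
qed

lemma coeffs_if_norm_pow2:
  assumes "of_coeffs s * cnj (of_coeffs s) = 2 ^ n" and "t < 8"
  shows "s t = 0 \<or> \<bar>s t\<bar> = 2 ^ (n div 2)"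
  using assms
proof (induction n arbitrary: s rule: less_induct)
  case (less n)
  show ?case
  proof (cases "2 \<le> n")
    case True
    define d where "d t = s t div 2" for t
    have "\<forall>t<8. s t = 2 * d t" using even_coeffs_if_norm_pow2[OF less.prems(1) True] by (simp add: d_def)
    then have "of_coeffs s = of_coeffs (\<lambda>t. 2 * d t)" by (simp add: of_coeffs_eq_iff)
    then have "of_coeffs s = 2 * of_coeffs d" by (simp add: of_coeffs_smult)
    moreover have "(2::complex) ^ n = 2 ^ 2 * 2 ^ (n - 2)" using True by (metis le_add_diff_inverse power_add)
    ultimately have "4 * (of_coeffs d * cnj (of_coeffs d)) = 4 * 2 ^ (n - 2)"
      using less.prems(1) by (simp add: mult_ac)
    then have "d t = 0 \<or> \<bar>d t\<bar> = 2 ^ ((n - 2) div 2)"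
      using less.IH[of "n - 2" d] True \<open>t < 8\<close> by simp
    moreover have "n div 2 = Suc ((n - 2) div 2)" using True by simp
    ultimately show ?thesis using \<open>\<forall>t<8. s t = 2 * d t\<close> \<open>t < 8\<close> by (auto simp: abs_mult)
  next
    case False
    have "of_coeffs s * cnj (of_coeffs s) = of_int (2 ^ n)" using less.prems(1) by simp
    then have "(\<Sum>t<8. s t ^ 2) = 2 ^ n" by (rule sum_squares_coeffs_if_norm_eq)
    moreover have "(2::int) ^ n \<le> 2 ^ 1" using False by (intro power_increasing) auto
    ultimately have "\<bar>s t\<bar> \<le> 1"
      using \<open>t < 8\<close> by (intro abs_le_1_if_sum_squares_le_2[of s "{..<8}"]) auto
    moreover have "(2::int) ^ (n div 2) = 1" using False by simp
    ultimately show ?thesis by auto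
  qed
qed

section \<open>Walsh spectrum of the Gray image\<close>

lemma finite_vecs: "finite (vecs m)"
  using finite_lists_length_eq[of "UNIV :: bool set" m] by (simp add: vecs_def)

lemma sum_vecs_add:
  "(\<Sum>z\<in>vecs (m + k). f z) = (\<Sum>x\<in>vecs m. \<Sum>y\<in>vecs k. f (x @ y))"
proof -
  have "vecs (m + k) = (\<lambda>(x, y). x @ y) ` (vecs m \<times> vecs k)"
  proof (intro equalityI subsetI)
    fix z assume "z \<in> vecs (m + k)"
    then show "z \<in> (\<lambda>(x, y). x @ y) ` (vecs m \<times> vecs k)"
      by (intro image_eqI[of _ _ "(take m z, drop m z)"]) (auto simp: vecs_def)
  qed (auto simp: vecs_def)
  moreover have "inj_on (\<lambda>(x, y). x @ y) (vecs m \<times> vecs k)"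
    by (auto simp: inj_on_def vecs_def)
  ultimately show ?thesis
    by (simp add: sum.reindex sum.cartesian_product split_def)
qed

lemma dotp_append:
  assumes "length u = length x"
  shows "dotp (u @ v) (x @ y) = (dotp u x \<noteq> dotp v y)"
proof -
  let ?I = "\<lambda>u x. {i. i < length x \<and> i < length u \<and> u ! i \<and> x ! i}"
  have "?I (u @ v) (x @ y) = ?I u x \<union> (\<lambda>i. i + length x) ` ?I v y"
  proof (intro equalityI subsetI)
    fix i assume "i \<in> ?I (u @ v) (x @ y)"
    then show "i \<in> ?I u x \<union> (\<lambda>i. i + length x) ` ?I v y"
      using assms by (cases "i < length x") (auto simp: nth_append intro!: image_eqI[of _ _ "i - length x"])
  qed (use assms in \<open>auto simp: nth_append\<close>)
  moreover have "card (?I u x \<union> (\<lambda>i. i + length x) ` ?I v y) = card (?I u x) + card (?I v y)"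
    by (subst card_Un_disjoint) (auto simp: card_image)
  ultimately show ?thesis unfolding dotp_def by simp
qed

lemma vecs_3: "vecs 3 = {[b1, b2, b3] | b1 b2 b3. True}"
proof (intro equalityI subsetI)
  fix v assume "v \<in> vecs 3"
  then have "v = [v ! 0, v ! 1, v ! 2]"
    by (intro nth_equalityI) (auto simp: vecs_def less_Suc_eq numeral_eq_Suc)
  then show "v \<in> {[b1, b2, b3] | b1 b2 b3. True}" by blast
qed (auto simp: vecs_def)

lemma dotp_3: "dotp [a1, a2, a3] [b1, b2, b3] = (((a1 \<and> b1) \<noteq> (a2 \<and> b2)) \<noteq> (a3 \<and> b3))"
proof -
  have single: "dotp [a] [b] = (a \<and> b)" for a b
  proof -
    have "{i. i < 1 \<and> i < 1 \<and> [a] ! i \<and> [b] ! i} = (if a \<and> b then {0} else {})" by auto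
    then show ?thesis unfolding dotp_def by simp
  qed
  have "dotp ([a1] @ [a2] @ [a3]) ([b1] @ [b2] @ [b3]) = (dotp [a1] [b1] \<noteq> (dotp [a2] [b2] \<noteq> dotp [a3] [b3]))"
    by (simp only: dotp_append length_Cons list.size)
  then show ?thesis by (simp add: single) blast
qed

definition bin3 :: "bool \<Rightarrow> bool \<Rightarrow> bool \<Rightarrow> nat" where
  "bin3 b1 b2 b3 = of_bool b1 + 2 * of_bool b2 + 4 * of_bool b3"

lemma bin3_less_8: "bin3 b1 b2 b3 < 8"
  unfolding bin3_def by (cases b1; cases b2; cases b3) simp_all

lemma bin3_eq_iff: "bin3 b1 b2 b3 = bin3 c1 c2 c3 \<longleftrightarrow> b1 = c1 \<and> b2 = c2 \<and> b3 = c3"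
  unfolding bin3_def by (cases b1; cases b2; cases b3; cases c1; cases c2; cases c3) simp_all

lemma neg_one_power_xor: "(-1::int) ^ of_bool (p \<noteq> q) = (-1) ^ of_bool p * (-1) ^ of_bool q"
  by (cases p; cases q) simp_all

lemma sum_vecs_3_gray:
  "(\<Sum>y\<in>vecs 3. (-1::int) ^ (of_bool (((y ! 0 \<and> b1) \<noteq> (y ! 1 \<and> b2)) \<noteq> ((y ! 2 \<and> b3) \<noteq> b4))
                               + of_bool (dotp [v1, v2, v3] y)))
   = (if b1 = v1 \<and> b2 = v2 \<and> b3 = v3 then 8 * (-1) ^ of_bool b4 else 0)"
proof -
  have "vecs 3 = {[False, False, False], [False, False, True], [False, True, False], [False, True, True],
      [True, False, False], [True, False, True], [True, True, False], [True, True, True]}"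
    unfolding vecs_3 by auto
  then show ?thesis
    by (cases v1; cases v2; cases v3; cases b4) (simp_all add: dotp_3)
qed

definition partial_walsh :: "nat \<Rightarrow> (bool list \<Rightarrow> bool) \<Rightarrow> (bool list \<Rightarrow> bool) \<Rightarrow> (bool list \<Rightarrow> bool)
    \<Rightarrow> (bool list \<Rightarrow> bool) \<Rightarrow> bool list \<Rightarrow> nat \<Rightarrow> int" where
  "partial_walsh n a1 a2 a3 a4 u t =
     (\<Sum>x\<in>{x \<in> vecs n. bin3 (a1 x) (a2 x) (a3 x) = t}. (-1) ^ (of_bool (a4 x) + of_bool (dotp u x)))"

lemma walsh_gray16:
  assumes "u \<in> vecs n" and "v \<in> vecs 3"
  shows "walsh (n + 3) (gray16 n a1 a2 a3 a4) (u @ v)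
    = 8 * partial_walsh n a1 a2 a3 a4 u (bin3 (v ! 0) (v ! 1) (v ! 2))"
proof -
  obtain v1 v2 v3 where v: "v = [v1, v2, v3]" using assms(2) vecs_3 by blast
  have "(\<Sum>y\<in>vecs 3. (-1::int) ^ (of_bool (gray16 n a1 a2 a3 a4 (x @ y)) + of_bool (dotp (u @ v) (x @ y))))
      = (if bin3 (a1 x) (a2 x) (a3 x) = bin3 v1 v2 v3
         then 8 * (-1) ^ (of_bool (a4 x) + of_bool (dotp u x)) else 0)"
    if "x \<in> vecs n" for x
  proof -
    have "length u = length x" using assms(1) that by (simp add: vecs_def)
    then have "(\<Sum>y\<in>vecs 3. (-1::int) ^ (of_bool (gray16 n a1 a2 a3 a4 (x @ y)) + of_bool (dotp (u @ v) (x @ y))))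
      = (-1) ^ of_bool (dotp u x) * (\<Sum>y\<in>vecs 3. (-1) ^ (of_bool
            (((y ! 0 \<and> a1 x) \<noteq> (y ! 1 \<and> a2 x)) \<noteq> ((y ! 2 \<and> a3 x) \<noteq> a4 x)) + of_bool (dotp v y)))"
      unfolding sum_distrib_left using assms(1)
      by (intro sum.cong) (simp_all add: gray16_def dotp_append power_add neg_one_power_xor vecs_def)
    then show ?thesis unfolding v sum_vecs_3_gray bin3_eq_iff by (simp add: power_add)
  qed
  then have "walsh (n + 3) (gray16 n a1 a2 a3 a4) (u @ v)
      = (\<Sum>x\<in>vecs n. if bin3 (a1 x) (a2 x) (a3 x) = bin3 v1 v2 v3
                       then 8 * (-1) ^ (of_bool (a4 x) + of_bool (dotp u x)) else 0)"
    unfolding walsh_def sum_vecs_add by (intro sum.cong) auto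
  then show ?thesis
    unfolding partial_walsh_def v sum.inter_filter[OF finite_vecs, symmetric] sum_distrib_left by simp
qed

lemma gwalsh_eq_of_coeffs:
  "gwalsh n 16 (\<lambda>x. of_bool (a1 x) + 2 * of_bool (a2 x) + 4 * of_bool (a3 x) + 8 * of_bool (a4 x)) u
   = of_coeffs (partial_walsh n a1 a2 a3 a4 u)"
proof -
  let ?t = "\<lambda>x. bin3 (a1 x) (a2 x) (a3 x)"
  let ?s = "\<lambda>x. (-1::int) ^ (of_bool (a4 x) + of_bool (dotp u x))"
  have "cis (2 * pi * real ((of_bool (a1 x) + 2 * of_bool (a2 x) + 4 * of_bool (a3 x) + 8 * of_bool (a4 x)) mod 16)
          / real (16::nat)) * (-1) ^ of_bool (dotp u x)
      = of_int (?s x) * zeta ^ ?t x" for x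
  proof -
    let ?k = "?t x + 8 * of_bool (a4 x)"
    have "?k < 16" using bin3_less_8[of "a1 x" "a2 x" "a3 x"] by simp
    then have "2 * pi * real (?k mod 16) / real (16::nat) = real ?k * pi / 8" by simp
    then have "cis (2 * pi * real (?k mod 16) / real (16::nat)) = zeta ^ ?k"
      unfolding zeta_pow by (simp only:)
    also have "\<dots> = (-1) ^ of_bool (a4 x) * zeta ^ ?t x"
      by (simp add: power_add power_mult zeta_pow_8)
    finally show ?thesis by (simp add: bin3_def power_add mult_ac)
  qed
  then have "gwalsh n 16 (\<lambda>x. of_bool (a1 x) + 2 * of_bool (a2 x) + 4 * of_bool (a3 x) + 8 * of_bool (a4 x)) u
      = (\<Sum>x\<in>vecs n. of_int (?s x) * zeta ^ ?t x)"
    unfolding gwalsh_def by simp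
  also have "\<dots> = (\<Sum>t<8. \<Sum>x\<in>{x \<in> vecs n. ?t x = t}. of_int (?s x) * zeta ^ ?t x)"
    by (rule sum.group[symmetric]) (auto simp: finite_vecs bin3_less_8)
  also have "\<dots> = of_coeffs (partial_walsh n a1 a2 a3 a4 u)"
    unfolding of_coeffs_def partial_walsh_def of_int_sum sum_distrib_right by simp
  finally show ?thesis .
qed

lemma partial_walsh_values_if_gbent:
  assumes "gbent n 16 (\<lambda>x. of_bool (a1 x) + 2 * of_bool (a2 x) + 4 * of_bool (a3 x) + 8 * of_bool (a4 x))"
    and "u \<in> vecs n" and "t < 8"
  shows "\<bar>partial_walsh n a1 a2 a3 a4 u t\<bar> \<in> {0, 2 ^ (n div 2)}"
proof -
  let ?z = "of_coeffs (partial_walsh n a1 a2 a3 a4 u)"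
  have "cmod ?z = 2 powr (real n / 2)"
    using assms(1,2) unfolding gbent_def gwalsh_eq_of_coeffs by blast
  then have "?z * cnj ?z = of_real ((2 powr (real n / 2))^2)"
    using complex_norm_square[of ?z] by simp
  also have "(2 powr (real n / 2))^2 = 2 powr real n"
    by (simp add: powr_add[symmetric] power2_eq_square)
  finally have "?z * cnj ?z = 2 ^ n" by (simp add: powr_realpow)
  then show ?thesis using coeffs_if_norm_pow2 assms(3) by fastforce
qed

lemma walsh_gray16_values:
  assumes "gbent n 16 (\<lambda>x. of_bool (a1 x) + 2 * of_bool (a2 x) + 4 * of_bool (a3 x) + 8 * of_bool (a4 x))"
    and "w \<in> vecs (n + 3)"
  shows "\<bar>walsh (n + 3) (gray16 n a1 a2 a3 a4) w\<bar> \<in> {0, 2 ^ (n div 2 + 3)}"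
proof -
  have "w = take n w @ drop n w" "take n w \<in> vecs n" "drop n w \<in> vecs 3"
    using assms(2) by (simp_all add: vecs_def)
  then have "walsh (n + 3) (gray16 n a1 a2 a3 a4) w
      = 8 * partial_walsh n a1 a2 a3 a4 (take n w) (bin3 (drop n w ! 0) (drop n w ! 1) (drop n w ! 2))"
    using walsh_gray16 by metis
  with partial_walsh_values_if_gbent[OF assms(1) \<open>take n w \<in> vecs n\<close> bin3_less_8]
  show ?thesis by (auto simp: abs_mult power_add)
qed

lemma plateaued_if_walsh_values:
  assumes "\<And>w. w \<in> vecs m \<Longrightarrow> \<bar>walsh m g w\<bar> \<in> {0, 2 ^ k}" and "m + s = 2 * k"
  shows "plateaued m s g"
proof -
  have "2 powr ((real m + real s) / 2) = 2 ^ k"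
    using assms(2) by (simp add: powr_realpow flip: of_nat_add)
  then show ?thesis
    unfolding plateaued_def using assms(1) by (force simp flip: of_int_abs)
qed

theorem mainTheorem12:
  fixes n :: nat and a1 a2 a3 a4 :: "bool list \<Rightarrow> bool"
  assumes "gbent n 16 (\<lambda>x. of_bool (a1 x) + 2 * of_bool (a2 x) + 4 * of_bool (a3 x) + 8 * of_bool (a4 x))"
  shows "(odd n \<longrightarrow> semibent (n + 3) (gray16 n a1 a2 a3 a4))
       \<and> (even n \<longrightarrow> plateaued (n + 3) 3 (gray16 n a1 a2 a3 a4))"
proof -
  have "plateaued (n + 3) s (gray16 n a1 a2 a3 a4)" if "n + 3 + s = 2 * (n div 2 + 3)" for s
    using walsh_gray16_values[OF assms] that by (rule plateaued_if_walsh_values)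
  then show ?thesis unfolding semibent_def by auto
qed

end
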